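(* Let $n\ge1$ and let $\mathfrak{g}$ be of type $B_n$. Then \[ \operatorname{Cat}_{n+1}(q)\prod_{k=1}^n(1+q^k)=\widetilde{\operatorname{ps}}(3\omega_n). \]
   Context: For type $B_n$, $\omega_n=\tfrac12(\epsilon_1+\cdots+\epsilon_n)$. The principal specialization $\operatorname{ps}(\lambda)$ is $\operatorname{ch}V(\lambda)$ with $x_i=q^i$ substituted (a Laurent polynomial in $q^{1/2}$), and $\widetilde{\operatorname{ps}}(\lambda)=q^{-\eta}\operatorname{ps}(\lambda)$ with $\eta$ the lowest exponent of $q$ in $\operatorname{ps}(\lambda)$. $\operatorname{Cat}_k(q)=\frac1{[k+1]_q}\begin{bmatrix}2k\\ k\end{bmatrix}_q$ is the Mahonian $q$-Catalan number. *)

theory Defs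
  imports "HOL-Computational_Algebra.Formal_Laurent_Series" "HOL-Combinatorics.Permutations"
begin

text \<open>Weights of type B_n are encoded by DOUBLED coordinates: a weight
  mu = sum_i mu_i eps_(i+1) is the function v :: nat => int with v i = 2 mu_i for i < n,
  and v i = 0 for i >= n.\<close>

definition weylB :: "nat \<Rightarrow> ((nat \<Rightarrow> nat) \<times> (nat \<Rightarrow> int)) set" where
  "weylB n = {(\<sigma>, e). \<sigma> permutes {..<n} \<and> (\<forall>i<n. e i = 1 \<or> e i = -1) \<and> (\<forall>i\<ge>n. e i = 1)}"

definition weyl_act :: "((nat \<Rightarrow> nat) \<times> (nat \<Rightarrow> int)) \<Rightarrow> (nat \<Rightarrow> int) \<Rightarrow> (nat \<Rightarrow> int)" where
  "weyl_act w v = (\<lambda>i. snd w i * v (fst w i))"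

definition weyl_sgn :: "nat \<Rightarrow> ((nat \<Rightarrow> nat) \<times> (nat \<Rightarrow> int)) \<Rightarrow> int" where
  "weyl_sgn n w = sign (fst w) * (\<Prod>i<n. snd w i)"

text \<open>rho = (n - 1/2, n - 3/2, ..., 1/2), doubled.\<close>
definition rhoB :: "nat \<Rightarrow> nat \<Rightarrow> int" where
  "rhoB n = (\<lambda>i. if i < n then 2 * int n - 2 * int i - 1 else 0)"

text \<open>m is the (formal) character of V(lam): a finitely supported weight-multiplicity
  function satisfying the Weyl character formula A_rho * ch = A_(lam+rho) in the group ring.\<close>
definition is_charB :: "nat \<Rightarrow> (nat \<Rightarrow> int) \<Rightarrow> ((nat \<Rightarrow> int) \<Rightarrow> int) \<Rightarrow> bool" where
  "is_charB n lam m \<longleftrightarrow>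
     finite {\<mu>. m \<mu> \<noteq> 0} \<and>
     (\<forall>\<mu>. m \<mu> \<noteq> 0 \<longrightarrow> (\<forall>i\<ge>n. \<mu> i = 0)) \<and>
     (\<forall>\<mu>. (\<Sum>w\<in>weylB n. weyl_sgn n w * m (\<lambda>i. \<mu> i - weyl_act w (rhoB n) i))
          = (\<Sum>w\<in>weylB n. weyl_sgn n w *
               (if weyl_act w (\<lambda>i. lam i + rhoB n i) = \<mu> then 1 else 0)))"

definition charB :: "nat \<Rightarrow> (nat \<Rightarrow> int) \<Rightarrow> (nat \<Rightarrow> int) \<Rightarrow> int" where
  "charB n lam = (THE m. is_charB n lam m)"

text \<open>Principal specialization x_i = q^i, written in the variable t = q^(1/2)
  (t = fls_X): e^mu maps to q^(sum_i mu_i * i) = t^(sum_i (2 mu_i) * i).\<close>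
definition psB :: "nat \<Rightarrow> (nat \<Rightarrow> int) \<Rightarrow> rat fls" where
  "psB n lam = (\<Sum>\<mu>\<in>{\<mu>. charB n lam \<mu> \<noteq> 0}.
      of_int (charB n lam \<mu>) * fls_X_intpow (\<Sum>i<n. int (i + 1) * \<mu> i))"

definition psB_tilde :: "nat \<Rightarrow> (nat \<Rightarrow> int) \<Rightarrow> rat fls" where
  "psB_tilde n lam = fls_shift (fls_subdegree (psB n lam)) (psB n lam)"

text \<open>3 omega_n = (3/2, ..., 3/2), doubled.\<close>
definition three_omega_n :: "nat \<Rightarrow> nat \<Rightarrow> int" where
  "three_omega_n n = (\<lambda>i. if i < n then 3 else 0)"

definition qvar :: "rat fls" where "qvar = fls_X ^ 2"

definition qint :: "nat \<Rightarrow> rat fls" where "qint m = (\<Sum>i<m. qvar ^ i)"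
definition qfact :: "nat \<Rightarrow> rat fls" where "qfact m = (\<Prod>i=1..m. qint i)"
definition qbinom :: "nat \<Rightarrow> nat \<Rightarrow> rat fls" where
  "qbinom m k = qfact m / (qfact k * qfact (m - k))"
definition qCat :: "nat \<Rightarrow> rat fls" where
  "qCat k = qbinom (2 * k) k / qint (k + 1)"

end

theory Submission
  imports Defs "Jordan_Normal_Form.Determinant" "HOL-Library.Poly_Mapping"
begin

text \<open>By the Weyl character formula, the principal specialization of \<open>V(\<lambda>)\<close> is the quotient
  of the specialized alternants \<open>A(\<lambda> + \<rho>)\<close> and \<open>A(\<rho>)\<close>, where
  \<open>A(\<mu>) = \<Sum>\<^sub>w sgn(w) e\<^bsup>w\<mu>\<^esup>\<close>. In type \<open>B\<^sub>n\<close> an alternant is the determinant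
  \<open>det (x\<^sub>i\<^bsup>\<mu>\<^sub>j\<^esup> - x\<^sub>i\<^bsup>-\<mu>\<^sub>j\<^esup>)\<close>, and Chebyshev-type column operations turn the alternants of
  \<open>\<rho>\<close> and \<open>3\<omega>\<^sub>n + \<rho>\<close> into Vandermonde determinants. After the specialization
  \<open>x\<^sub>i \<mapsto> q\<^bsup>i/2\<^esup>\<close> these factor into a power of \<open>q\<^bsup>1/2\<^esup>\<close> times factors \<open>1 - q\<^sup>m\<close>, and the quotient
  is a monomial times \<open>\<Prod>\<^bsub>0 \<le> k' \<le> k < n\<^esub> (1 - q\<^bsup>k+k'+4\<^esup>) / (1 - q\<^bsup>k+k'+1\<^esup>)\<close>, which telescopes
  to \<open>Cat\<^sub>n\<^sub>+\<^sub>1(q) \<Prod>\<^sub>k (1 + q\<^sup>k)\<close>.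

  Since \<open>charB\<close> is defined as the unique solution of the character formula, one must also show in
  the group ring that \<open>A(\<rho>) \<noteq> 0\<close> and that \<open>A(\<rho>)\<close> divides \<open>A(3\<omega>\<^sub>n + \<rho>)\<close>. Up to the factors
  \<open>x\<^sub>i - x\<^sub>i\<^sup>-\<^sup>1\<close> common to both, this says that a Vandermonde-type determinant with its constant
  column skipped is divisible by the Vandermonde determinant.\<close>

section \<open>Vandermonde determinants\<close>

definition vandermonde :: "nat \<Rightarrow> (nat \<Rightarrow> 'a::comm_ring_1) \<Rightarrow> 'a" where
  "vandermonde n z = (\<Prod>i<n. \<Prod>j<i. z i - z j)"

lemma det_scale_rows:
  fixes r :: "nat \<Rightarrow> 'a::comm_ring_1"
  shows "det (mat n n (\<lambda>(i,j). r i * a i j)) = (\<Prod>i<n. r i) * det (mat n n (\<lambda>(i,j). a i j))"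
proof -
  have "det (mat n n (\<lambda>(i,j). r i * a i j)) =
      (\<Sum>p | p permutes {0..<n}. signof p * (\<Prod>i=0..<n. r i * a i (p i)))"
    by (subst det_def'[of _ n]) (auto intro!: sum.cong prod.cong simp: permutes_def)
  also have "\<dots> = (\<Sum>p | p permutes {0..<n}. (\<Prod>i<n. r i) * (signof p * (\<Prod>i=0..<n. a i (p i))))"
    by (intro sum.cong refl) (simp add: prod.distrib atLeast0LessThan mult_ac)
  also have "\<dots> = (\<Prod>i<n. r i) * det (mat n n (\<lambda>(i,j). a i j))"
    by (subst det_def'[of _ n])
      (auto simp: sum_distrib_left permutes_def intro!: sum.cong prod.cong arg_cong2[where f="(*)"])
  finally show ?thesis .
qed

lemma poly_eq_sum_lessThan:
  fixes p :: "'a::comm_semiring_1 poly"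
  assumes "degree p < n"
  shows "poly p x = (\<Sum>k<n. coeff p k * x ^ k)"
proof -
  have "poly p x = (\<Sum>k\<le>degree p. coeff p k * x ^ k)" by (simp add: poly_altdef)
  also have "\<dots> = (\<Sum>k<n. coeff p k * x ^ k)"
    using assms by (intro sum.mono_neutral_left) (auto simp: coeff_eq_0)
  finally show ?thesis .
qed

text \<open>Column operations: the matrix of values of the \<open>p j\<close> is the power matrix times the
  unitriangular matrix of their coefficients.\<close>

lemma det_poly_cols_eq_det_powers:
  fixes z :: "nat \<Rightarrow> 'a::comm_ring_1" and p :: "nat \<Rightarrow> 'a poly"
  assumes deg: "\<And>j. j < n \<Longrightarrow> degree (p j) \<le> j" and lc: "\<And>j. j < n \<Longrightarrow> coeff (p j) j = 1"
  shows "det (mat n n (\<lambda>(i,j). poly (p j) (z i))) = det (mat n n (\<lambda>(i,j). z i ^ j))"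
proof -
  let ?V = "mat n n (\<lambda>(i,j). z i ^ j)"
  let ?C = "mat n n (\<lambda>(k,j). coeff (p j) k)"
  have "mat n n (\<lambda>(i,j). poly (p j) (z i)) = ?V * ?C"
  proof (rule eq_matI)
    fix i j assume i: "i < dim_row (?V * ?C)" and j: "j < dim_col (?V * ?C)"
    have "degree (p j) < n" using deg[of j] j by simp
    then show "mat n n (\<lambda>(i,j). poly (p j) (z i)) $$ (i,j) = (?V * ?C) $$ (i,j)"
      using i j by (simp add: scalar_prod_def atLeast0LessThan poly_eq_sum_lessThan mult_ac)
  qed auto
  moreover have "det ?C = 1"
  proof -
    have "degree (p j) < i" if "i < n" "j < i" for i j
      using deg[of j] that by linarith
    then show ?thesis
      by (subst det_upper_triangular[of _ n])
        (auto simp: upper_triangular_def prod_list_diag_prod lc intro!: prod.neutral coeff_eq_0)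
  qed
  ultimately show ?thesis by (simp add: det_mult[of _ n])
qed

lemma monic_prod_linear:
  fixes z :: "nat \<Rightarrow> 'a::comm_ring_1"
  shows "degree (\<Prod>l<j. [:- z l, 1:]) \<le> j \<and> coeff (\<Prod>l<j. [:- z l, 1:]) j = 1"
proof (induction j)
  case (Suc j)
  let ?P = "\<Prod>l<j. [:- z l, 1:]"
  have "coeff ?P (Suc j) = 0" using Suc by (intro coeff_eq_0) simp
  moreover have "degree (?P * [:- z j, 1:]) \<le> Suc j"
    using Suc degree_mult_le[of ?P "[:- z j, 1:]"] by simp
  ultimately show ?case using Suc by (simp add: mult.commute[of ?P])
qed simp

text \<open>With the columns \<open>\<Prod>l<j. X - z l\<close> the matrix becomes lower triangular.\<close>

lemma det_powers_eq_vandermonde: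
  fixes z :: "nat \<Rightarrow> 'a::comm_ring_1"
  shows "det (mat n n (\<lambda>(i,j). z i ^ j)) = vandermonde n z"
proof -
  define P where "P j = (\<Prod>l<j. [:- z l, 1:])" for j
  have "det (mat n n (\<lambda>(i,j). z i ^ j)) = det (mat n n (\<lambda>(i,j). poly (P j) (z i)))"
    unfolding P_def using monic_prod_linear[where z=z] by (intro det_poly_cols_eq_det_powers[symmetric]) auto
  also have "\<dots> = prod_list (diag_mat (mat n n (\<lambda>(i,j). poly (P j) (z i))))"
    by (rule det_lower_triangular[of n]) (auto simp: P_def poly_prod intro!: prod_zero)
  also have "\<dots> = vandermonde n z"
    by (simp add: prod_list_diag_prod vandermonde_def P_def poly_prod atLeast0LessThan)
  finally show ?thesis .
qed

lemma det_poly_cols_eq_vandermonde: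
  fixes z :: "nat \<Rightarrow> 'a::comm_ring_1" and p :: "nat \<Rightarrow> 'a poly"
  assumes "\<And>j. j < n \<Longrightarrow> degree (p j) \<le> j" and "\<And>j. j < n \<Longrightarrow> coeff (p j) j = 1"
  shows "det (mat n n (\<lambda>(i,j). poly (p j) (z i))) = vandermonde n z"
  using det_poly_cols_eq_det_powers[OF assms] det_powers_eq_vandermonde by simp

definition skip :: "nat \<Rightarrow> nat \<Rightarrow> nat" where
  "skip k j = (if j < k then j else Suc j)"

lemma det_map_mat_const_poly: "det (map_mat (\<lambda>c. [:c:]) A) = [:det (A :: 'a::comm_ring_1 mat):]"
proof -
  interpret const_poly: comm_ring_hom "\<lambda>c::'a. [:c:]"
    by unfold_locales (simp_all add: mult_to_poly one_pCons)
  show ?thesis by (rule const_poly.hom_det)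
qed

lemma det_vandermonde_variable:
  fixes z :: "nat \<Rightarrow> 'a::comm_ring_1" and p :: "nat \<Rightarrow> 'a poly"
  assumes deg: "\<And>j. j \<le> n \<Longrightarrow> degree (p j) \<le> j" and lc: "\<And>j. j \<le> n \<Longrightarrow> coeff (p j) j = 1"
  shows "det (mat (Suc n) (Suc n) (\<lambda>(i,j).
      poly (map_poly (\<lambda>c. [:c:]) (p j)) (if i < n then [:z i:] else [:0, 1:])))
    = Polynomial.smult (vandermonde n z) (\<Prod>i<n. [:- z i, 1:])"
proof -
  define pt :: "nat \<Rightarrow> 'a poly" where "pt i = (if i < n then [:z i:] else [:0, 1:])" for i
  have "det (mat (Suc n) (Suc n) (\<lambda>(i,j). poly (map_poly (\<lambda>c. [:c:]) (p j)) (pt i)))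
      = vandermonde (Suc n) pt"
  proof (rule det_poly_cols_eq_vandermonde)
    fix j assume "j < Suc n"
    then show "degree (map_poly (\<lambda>c. [:c:]) (p j)) \<le> j" "coeff (map_poly (\<lambda>c. [:c:]) (p j)) j = 1"
      using deg[of j] lc[of j] map_poly_degree_leq[of "\<lambda>c. [:c:]" "p j"]
      by (auto simp: coeff_map_poly)
  qed
  moreover have "vandermonde n pt = [:vandermonde n z:]"
    unfolding vandermonde_def prod_to_poly[symmetric]
    by (intro prod.cong refl) (simp add: pt_def diff_to_poly)
  moreover have "vandermonde (Suc n) pt = vandermonde n pt * (\<Prod>i<n. pt n - pt i)"
    unfolding vandermonde_def by simp
  ultimately show ?thesis by (simp add: pt_def)
qed

text \<open>Laplace expansion of \<open>det_vandermonde_variable\<close> along its last row.\<close>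

lemma vandermonde_cofactor_identity:
  fixes z :: "nat \<Rightarrow> 'a::comm_ring_1" and p :: "nat \<Rightarrow> 'a poly"
  assumes deg: "\<And>j. j \<le> n \<Longrightarrow> degree (p j) \<le> j" and lc: "\<And>j. j \<le> n \<Longrightarrow> coeff (p j) j = 1"
  shows "(\<Sum>j\<le>n. Polynomial.smult ((-1)^(n+j) * det (mat n n (\<lambda>(i,l). poly (p (skip j l)) (z i)))) (p j))
    = Polynomial.smult (vandermonde n z) (\<Prod>i<n. [:- z i, 1:])"
proof -
  define E where "E j = det (mat n n (\<lambda>(i,l). poly (p (skip j l)) (z i)))" for j
  define B where "B = mat (Suc n) (Suc n) (\<lambda>(i,j).
    poly (map_poly (\<lambda>c. [:c:]) (p j)) (if i < n then [:z i:] else [:0, 1:]))"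
  have "det B = (\<Sum>j<Suc n. B $$ (n,j) * cofactor B n j)"
    by (rule laplace_expansion_row) (simp_all add: B_def)
  also have "\<dots> = (\<Sum>j\<le>n. Polynomial.smult ((-1)^(n+j) * E j) (p j))"
    unfolding lessThan_Suc_atMost
  proof (intro sum.cong refl)
    fix j assume j: "j \<in> {..n}"
    have "B $$ (n,j) = p j"
      using j by (simp add: B_def pcompose_altdef[symmetric] pcompose_idR)
    moreover have "mat_delete B n j = map_mat (\<lambda>c. [:c:]) (mat n n (\<lambda>(i,l). poly (p (skip j l)) (z i)))"
      unfolding mat_delete_def B_def skip_def
      by (rule eq_matI) (auto simp: pcompose_altdef[symmetric] pcompose_pCons_0)
    moreover have "(-1)^(n+j) * [:E j:] = [:(-1)^(n+j) * E j:]"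
      by (cases "even (n+j)") auto
    ultimately show "B $$ (n,j) * cofactor B n j = Polynomial.smult ((-1)^(n+j) * E j) (p j)"
      by (simp add: cofactor_def det_map_mat_const_poly flip: E_def)
  qed
  finally show ?thesis
    using det_vandermonde_variable[OF deg lc] by (simp add: B_def E_def)
qed

text \<open>Comparing coefficients in the cofactor identity from the top down: for \<open>j < k\<close> the
  polynomial \<open>p j\<close> has no \<open>X^k\<close> term, and for \<open>j > k\<close> the cofactor is divisible by induction.\<close>

lemma vandermonde_dvd_det_skip:
  fixes z :: "nat \<Rightarrow> 'a::comm_ring_1" and p :: "nat \<Rightarrow> 'a poly"
  assumes deg: "\<And>j. j \<le> n \<Longrightarrow> degree (p j) \<le> j" and lc: "\<And>j. j \<le> n \<Longrightarrow> coeff (p j) j = 1"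
    and "k \<le> n"
  shows "vandermonde n z dvd det (mat n n (\<lambda>(i,l). poly (p (skip k l)) (z i)))"
  using \<open>k \<le> n\<close>
proof (induction "n - k" arbitrary: k rule: less_induct)
  case less
  define V where "V = vandermonde n z"
  define f where "f j = (-1)^(n+j) * det (mat n n (\<lambda>(i,l). poly (p (skip j l)) (z i))) * coeff (p j) k"
    for j
  have "(\<Sum>j\<le>n. f j) = V * coeff (\<Prod>i<n. [:- z i, 1:]) k"
    using arg_cong[where f="\<lambda>q. coeff q k", OF vandermonde_cofactor_identity[OF deg lc]]
    by (simp add: f_def V_def coeff_sum)
  then have total: "V dvd f k + (\<Sum>j\<in>{..n} - {k}. f j)"
    using less.prems by (simp add: sum.remove[of _ k])
  have rest: "V dvd (\<Sum>j\<in>{..n} - {k}. f j)"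
  proof (rule dvd_sum)
    fix j assume j: "j \<in> {..n} - {k}"
    show "V dvd f j"
    proof (cases "j < k")
      case True
      then have "coeff (p j) k = 0" using deg[of j] j by (intro coeff_eq_0) auto
      then show ?thesis by (simp add: f_def)
    next
      case False
      then have "n - j < n - k" using j less.prems by auto
      then show ?thesis using less.hyps[of j] j by (auto simp: f_def V_def intro: dvd_mult dvd_mult2)
    qed
  qed
  have "V dvd f k" using total unfolding dvd_add_left_iff[OF rest] .
  then have "V dvd (-1)^(n+k) * f k" by (rule dvd_mult)
  moreover have "(-1)^(n+k) * f k = det (mat n n (\<lambda>(i,l). poly (p (skip k l)) (z i)))"
    using lc[OF less.prems] by (simp add: f_def mult.assoc[symmetric] power_mult_distrib[symmetric])
  ultimately show ?case by (simp add: V_def)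
qed

section \<open>Chebyshev-type polynomials\<close>

text \<open>\<open>cheb 0\<close> and \<open>cheb 1\<close> are the Chebyshev polynomials of the second and fourth kind,
  rescaled to the variable \<open>2 cos \<theta>\<close>.\<close>

fun cheb :: "'a::comm_ring_1 \<Rightarrow> nat \<Rightarrow> 'a poly" where
  "cheb c 0 = 1"
| "cheb c (Suc 0) = [:c, 1:]"
| "cheb c (Suc (Suc k)) = [:0, 1:] * cheb c (Suc k) - cheb c k"

lemma cheb_monic: "degree (cheb c k) \<le> k \<and> coeff (cheb c k) k = 1"
proof (induction c k rule: cheb.induct)
  case (3 c k)
  have "degree ([:0, 1:] * cheb c (Suc k)) \<le> Suc (Suc k)"
    using 3 degree_mult_le[of "[:0, 1:]" "cheb c (Suc k)"] by simp
  moreover have "degree (cheb c k) \<le> Suc (Suc k)" using 3 by simp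
  moreover have "coeff (cheb c k) (Suc (Suc k)) = 0" using 3 by (intro coeff_eq_0) simp
  ultimately show ?case
    using 3 by (simp add: degree_diff_le)
qed simp_all

lemma degree_cheb: "degree (cheb c k) \<le> k"
  and coeff_cheb_self: "coeff (cheb c k) k = 1"
  using cheb_monic by blast+

text \<open>The sequence \<open>x^k * a - y^k * b\<close> satisfies the recurrence of \<open>cheb\<close> in \<open>x + y\<close>
  as soon as \<open>x * y = 1\<close>.\<close>

lemma poly_cheb:
  fixes x y a b c :: "'a::comm_ring_1"
  assumes xy: "x * y = 1" and one: "x * a - y * b = (a - b) * (x + y + c)"
  shows "x ^ k * a - y ^ k * b = (a - b) * poly (cheb c k) (x + y)"
proof (induction k rule: induct_nat_012)
  case (ge2 k)
  have "x * y ^ Suc k = y ^ k" "y * x ^ Suc k = x ^ k"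
    using xy by (simp_all add: mult.assoc[symmetric] mult.commute[of y x])
  then have "x ^ Suc (Suc k) * a - y ^ Suc (Suc k) * b
      = (x + y) * (x ^ Suc k * a - y ^ Suc k * b) - (x ^ k * a - y ^ k * b)"
    by (simp add: algebra_simps)
  also have "\<dots> = (x + y) * ((a - b) * poly (cheb c (Suc k)) (x + y)) - (a - b) * poly (cheb c k) (x + y)"
    using ge2 by simp
  also have "\<dots> = (a - b) * poly (cheb c (Suc (Suc k))) (x + y)"
    by (simp add: algebra_simps)
  finally show ?case .
qed (use one in \<open>simp_all add: algebra_simps\<close>)

section \<open>Alternating sums over the Weyl group\<close>

definition sign_vectors :: "nat \<Rightarrow> (nat \<Rightarrow> int) set" where
  "sign_vectors n = {e. (\<forall>i<n. e i = 1 \<or> e i = -1) \<and> (\<forall>i\<ge>n. e i = 1)}"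

lemma sign_vectors_0: "sign_vectors 0 = {\<lambda>_. 1}"
  by (auto simp: sign_vectors_def)

lemma sign_vectors_Suc:
  "sign_vectors (Suc n) = (\<lambda>(e, s). e(n := s)) ` (sign_vectors n \<times> {1, -1})"
proof (intro equalityI subsetI)
  fix e assume e: "e \<in> sign_vectors (Suc n)"
  then have "(e(n := 1), e n) \<in> sign_vectors n \<times> {1, -1}"
    by (auto simp: sign_vectors_def less_Suc_eq)
  moreover have "e = (\<lambda>(e, s). e(n := s)) (e(n := 1), e n)" by simp
  ultimately show "e \<in> (\<lambda>(e, s). e(n := s)) ` (sign_vectors n \<times> {1, -1})" by blast
qed (auto simp: sign_vectors_def less_Suc_eq)

lemma inj_on_sign_vectors_upd: "inj_on (\<lambda>(e, s). e(n := s)) (sign_vectors n \<times> {1, -1})"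
proof (rule inj_onI, clarify)
  fix e s e' s'
  assume "e \<in> sign_vectors n" "e' \<in> sign_vectors n" and eq: "e(n := s) = e'(n := s')"
  have "e i = e' i" for i
  proof (cases "i = n")
    case True
    with \<open>e \<in> sign_vectors n\<close> \<open>e' \<in> sign_vectors n\<close> show ?thesis by (simp add: sign_vectors_def)
  next
    case False
    then show ?thesis using fun_cong[OF eq, of i] by simp
  qed
  then show "e = e' \<and> s = s'" using fun_cong[OF eq, of n] by auto
qed

lemma sum_sign_vectors_prod:
  fixes F :: "nat \<Rightarrow> int \<Rightarrow> 'a::comm_semiring_1"
  shows "(\<Sum>e\<in>sign_vectors n. \<Prod>i<n. F i (e i)) = (\<Prod>i<n. F i 1 + F i (-1))"
proof (induction n)
  case (Suc n)
  have "(\<Sum>e\<in>sign_vectors (Suc n). \<Prod>i<Suc n. F i (e i))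
      = (\<Sum>(e, s)\<in>sign_vectors n \<times> {1, -1}. (\<Prod>i<n. F i (e i)) * F n s)"
    unfolding sign_vectors_Suc sum.reindex[OF inj_on_sign_vectors_upd]
    by (intro sum.cong refl) (auto intro!: prod.cong)
  also have "\<dots> = (\<Sum>e\<in>sign_vectors n. \<Prod>i<n. F i (e i)) * (F n 1 + F n (-1))"
    by (simp add: sum.cartesian_product[symmetric] sum_distrib_right distrib_left sum.distrib)
  finally show ?case using Suc by simp
qed (simp add: sign_vectors_0)

lemma weylB_eq_Times: "weylB n = {\<sigma>. \<sigma> permutes {..<n}} \<times> sign_vectors n"
  unfolding weylB_def sign_vectors_def by auto

text \<open>Summing out the signs first leaves the Leibniz expansion of a determinant.\<close>

lemma weyl_alternating_sum_eq_det:
  fixes g :: "nat \<Rightarrow> int \<Rightarrow> 'a::comm_ring_1"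
  shows "(\<Sum>w\<in>weylB n. of_int (weyl_sgn n w) * (\<Prod>i<n. g i (weyl_act w \<mu> i)))
       = det (mat n n (\<lambda>(i,j). g i (\<mu> j) - g i (- \<mu> j)))"
proof -
  have "(\<Sum>w\<in>weylB n. of_int (weyl_sgn n w) * (\<Prod>i<n. g i (weyl_act w \<mu> i)))
     = (\<Sum>(\<sigma>, e)\<in>{\<sigma>. \<sigma> permutes {..<n}} \<times> sign_vectors n.
          of_int (sign \<sigma>) * (\<Prod>i<n. of_int (e i) * g i (e i * \<mu> (\<sigma> i))))"
    unfolding weylB_eq_Times weyl_sgn_def weyl_act_def
    by (intro sum.cong refl) (auto simp: prod.distrib mult_ac)
  also have "\<dots> = (\<Sum>\<sigma> | \<sigma> permutes {..<n}. of_int (sign \<sigma>) *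
          (\<Sum>e\<in>sign_vectors n. \<Prod>i<n. of_int (e i) * g i (e i * \<mu> (\<sigma> i))))"
    by (simp add: sum.cartesian_product[symmetric] sum_distrib_left)
  also have "\<dots> = (\<Sum>\<sigma> | \<sigma> permutes {..<n}.
          of_int (sign \<sigma>) * (\<Prod>i<n. g i (\<mu> (\<sigma> i)) - g i (- \<mu> (\<sigma> i))))"
  proof (intro sum.cong refl)
    fix \<sigma> :: "nat \<Rightarrow> nat"
    show "of_int (sign \<sigma>) * (\<Sum>e\<in>sign_vectors n. \<Prod>i<n. of_int (e i) * g i (e i * \<mu> (\<sigma> i)))
        = of_int (sign \<sigma>) * (\<Prod>i<n. g i (\<mu> (\<sigma> i)) - g i (- \<mu> (\<sigma> i)))"
      using sum_sign_vectors_prod[of "\<lambda>i s. of_int s * g i (s * \<mu> (\<sigma> i))" n] by simp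
  qed
  also have "\<dots> = det (mat n n (\<lambda>(i,j). g i (\<mu> j) - g i (- \<mu> j)))"
    by (subst det_def'[of _ n]) (auto simp: atLeast0LessThan permutes_def intro!: sum.cong prod.cong)
  finally show ?thesis .
qed

definition rev_perm :: "nat \<Rightarrow> nat \<Rightarrow> nat" where
  "rev_perm n j = (if j < n then n - 1 - j else j)"

lemma rev_perm_permutes: "rev_perm n permutes {0..<n}"
proof -
  have "bij_betw (rev_perm n) {0..<n} {0..<n}"
    by (rule bij_betw_byWitness[where f'="rev_perm n"]) (auto simp: rev_perm_def)
  then show ?thesis by (rule bij_imp_permutes) (auto simp: rev_perm_def)
qed

lemma det_permute_cols:
  assumes p: "\<pi> permutes {0..<n}"
  shows "det (mat n n (\<lambda>(i,j). f i (\<pi> j))) = signof \<pi> * det (mat n n (\<lambda>(i,j). f i j))"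
proof -
  let ?B = "mat n n (\<lambda>(i,j). f j i)"
  have "det (mat n n (\<lambda>(i,j). f i (\<pi> j))) = det (transpose_mat (mat n n (\<lambda>(i,j). f i (\<pi> j))))"
    by (rule det_transpose[symmetric, of _ n]) simp
  also have "transpose_mat (mat n n (\<lambda>(i,j). f i (\<pi> j))) = mat n n (\<lambda>(i,j). ?B $$ (\<pi> i, j))"
    using permutes_in_image[OF p] by (intro eq_matI) auto
  also have "det \<dots> = signof \<pi> * det ?B"
    by (rule det_permute_rows[OF _ p]) simp
  also have "?B = transpose_mat (mat n n (\<lambda>(i,j). f i j))"
    by (intro eq_matI) auto
  finally show ?thesis by (simp add: det_transpose[of _ n])
qed

lemma det_reverse_cols:
  "det (mat n n (\<lambda>(i,j). f i j)) = signof (rev_perm n) * det (mat n n (\<lambda>(i,j). f i (rev_perm n j)))"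
proof -
  have "mat n n (\<lambda>(i,j). f i j) = mat n n (\<lambda>(i,j). f i (rev_perm n (rev_perm n j)))"
    by (intro eq_matI) (auto simp: rev_perm_def)
  then show ?thesis
    using det_permute_cols[OF rev_perm_permutes, where f="\<lambda>i j. f i (rev_perm n j)"] by simp
qed

lemma rhoB_rev_perm: "j < n \<Longrightarrow> rhoB n (rev_perm n j) = int (2 * j + 1)"
  by (auto simp: rhoB_def rev_perm_def of_nat_diff)

lemma three_omega_rhoB_rev_perm:
  "j < n \<Longrightarrow> three_omega_n n (rev_perm n j) + rhoB n (rev_perm n j) = int (2 * (j + 2))"
  by (auto simp: rhoB_def rev_perm_def three_omega_n_def of_nat_diff)

section \<open>Alternants in the group ring\<close>

text \<open>Since weights are stored with doubled coordinates,
  the key \<open>single i k\<close> stands for \<open>x\<^sub>i\<^sup>k\<close> with \<open>x\<^sub>i = e\<^bsup>\<epsilon>\<^sub>i\<^sub>+\<^sub>1/2\<^esup>\<close>.\<close>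

type_synonym group_ring = "(nat \<Rightarrow>\<^sub>0 int) \<Rightarrow>\<^sub>0 int"

definition xpow :: "nat \<Rightarrow> int \<Rightarrow> group_ring" where
  "xpow i k = Poly_Mapping.single (Poly_Mapping.single i k) 1"

definition weight_key :: "nat \<Rightarrow> (nat \<Rightarrow> int) \<Rightarrow> nat \<Rightarrow>\<^sub>0 int" where
  "weight_key n v = (\<Sum>i<n. Poly_Mapping.single i (v i))"

definition alternant :: "nat \<Rightarrow> (nat \<Rightarrow> int) \<Rightarrow> group_ring" where
  "alternant n \<mu> = (\<Sum>w\<in>weylB n. Poly_Mapping.single (weight_key n (weyl_act w \<mu>)) (weyl_sgn n w))"

lemma xpow_add: "xpow i a * xpow i b = xpow i (a + b)"
  by (simp add: xpow_def mult_single single_add)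

lemma xpow_0 [simp]: "xpow i 0 = 1"
  by (simp add: xpow_def)

lemma xpow_power: "xpow i a ^ m = xpow i (int m * a)"
  by (induction m) (simp_all add: xpow_def xpow_add[unfolded xpow_def] algebra_simps)

lemma prod_xpow: "(\<Prod>i<n. xpow i (v i)) = Poly_Mapping.single (weight_key n v) 1"
  by (induction n) (simp_all add: weight_key_def xpow_def mult_single)

lemma alternant_eq_det: "alternant n \<mu> = det (mat n n (\<lambda>(i,j). xpow i (\<mu> j) - xpow i (- \<mu> j)))"
proof -
  have "alternant n \<mu> = (\<Sum>w\<in>weylB n. of_int (weyl_sgn n w) * (\<Prod>i<n. xpow i (weyl_act w \<mu> i)))"
    unfolding alternant_def prod_xpow
    by (simp add: mult_single flip: single_of_int)
  then show ?thesis by (simp only: weyl_alternating_sum_eq_det)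
qed

definition zvar :: "nat \<Rightarrow> group_ring" where
  "zvar i = xpow i 2 + xpow i (-2)"

lemma alternant_rhoB:
  "alternant n (rhoB n) =
     signof (rev_perm n) * ((\<Prod>i<n. xpow i 1 - xpow i (-1)) * vandermonde n zvar)"
proof -
  have entry: "xpow i (int (2 * j + 1)) - xpow i (- int (2 * j + 1))
      = (xpow i 1 - xpow i (-1)) * poly (cheb 1 j) (zvar i)" for i j
  proof -
    have "xpow i (int (2 * j + 1)) - xpow i (- int (2 * j + 1))
        = xpow i 2 ^ j * xpow i 1 - xpow i (-2) ^ j * xpow i (-1)"
      by (simp add: xpow_power xpow_add algebra_simps)
    also have "\<dots> = (xpow i 1 - xpow i (-1)) * poly (cheb 1 j) (zvar i)"
      unfolding zvar_def
      by (rule poly_cheb) (simp_all add: xpow_add algebra_simps)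
    finally show ?thesis .
  qed
  have "alternant n (rhoB n) = signof (rev_perm n) *
      det (mat n n (\<lambda>(i,j). (xpow i 1 - xpow i (-1)) * poly (cheb 1 j) (zvar i)))"
    unfolding alternant_eq_det
    by (subst det_reverse_cols, intro arg_cong[where f="\<lambda>A. _ * det A"] cong_mat)
      (simp_all only: prod.case rhoB_rev_perm entry)
  then show ?thesis
    by (simp add: det_scale_rows det_poly_cols_eq_vandermonde degree_cheb coeff_cheb_self)
qed

lemma alternant_three_omega_rhoB:
  "alternant n (\<lambda>i. three_omega_n n i + rhoB n i) =
     signof (rev_perm n) * ((\<Prod>i<n. xpow i 2 - xpow i (-2)) *
       det (mat n n (\<lambda>(i,j). poly (cheb 0 (skip 0 j)) (zvar i))))"
proof -
  have entry: "xpow i (int (2 * (j + 2))) - xpow i (- int (2 * (j + 2)))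
      = (xpow i 2 - xpow i (-2)) * poly (cheb 0 (skip 0 j)) (zvar i)" for i j
  proof -
    have "xpow i (int (2 * (j + 2))) - xpow i (- int (2 * (j + 2)))
        = xpow i 2 ^ Suc j * xpow i 2 - xpow i (-2) ^ Suc j * xpow i (-2)"
      by (simp add: xpow_power xpow_add algebra_simps)
    also have "\<dots> = (xpow i 2 - xpow i (-2)) * poly (cheb 0 (Suc j)) (zvar i)"
      unfolding zvar_def
      by (rule poly_cheb) (simp_all add: xpow_add algebra_simps)
    finally show ?thesis by (simp add: skip_def)
  qed
  have "alternant n (\<lambda>i. three_omega_n n i + rhoB n i) = signof (rev_perm n) *
      det (mat n n (\<lambda>(i,j). (xpow i 2 - xpow i (-2)) * poly (cheb 0 (skip 0 j)) (zvar i)))"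
    unfolding alternant_eq_det
    by (subst det_reverse_cols, intro arg_cong[where f="\<lambda>A. _ * det A"] cong_mat)
      (simp_all only: prod.case three_omega_rhoB_rev_perm entry)
  then show ?thesis by (simp add: det_scale_rows)
qed

lemma alternant_rhoB_dvd: "alternant n (rhoB n) dvd alternant n (\<lambda>i. three_omega_n n i + rhoB n i)"
proof -
  have "xpow i 2 - xpow i (-2) = (xpow i 1 - xpow i (-1)) * (xpow i 1 + xpow i (-1))" for i
    by (simp add: algebra_simps xpow_add)
  then have "(\<Prod>i<n. xpow i 2 - xpow i (-2))
      = (\<Prod>i<n. xpow i 1 - xpow i (-1)) * (\<Prod>i<n. xpow i 1 + xpow i (-1))"
    by (simp add: prod.distrib)
  moreover have "vandermonde n zvar dvd det (mat n n (\<lambda>(i,j). poly (cheb 0 (skip 0 j)) (zvar i)))"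
    by (rule vandermonde_dvd_det_skip) (simp_all add: degree_cheb coeff_cheb_self)
  ultimately show ?thesis
    unfolding alternant_rhoB alternant_three_omega_rhoB by (simp add: mult_dvd_mono mult.assoc)
qed

lemma lookup_xpow: "Poly_Mapping.lookup (xpow i a) k = (if k = Poly_Mapping.single i a then 1 else 0)"
  by (simp add: xpow_def lookup_single when_def eq_commute)

lemma single_eq_single_iff:
  "Poly_Mapping.single (i::nat) (a::int) = Poly_Mapping.single j b \<longleftrightarrow> a = b \<and> (a = 0 \<or> i = j)"
  by (metis lookup_single_eq lookup_single_not_eq single_zero)

lemma alternant_rhoB_nonzero: "alternant n (rhoB n) \<noteq> 0"
proof -
  have "xpow i 1 - xpow i (-1) \<noteq> 0" for i
  proof
    assume "xpow i 1 - xpow i (-1) = 0"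
    then have "Poly_Mapping.lookup (xpow i 1 - xpow i (-1)) (Poly_Mapping.single i 1) = 0" by simp
    then show False by (simp add: lookup_minus lookup_xpow single_eq_single_iff)
  qed
  moreover have "zvar i - zvar j \<noteq> 0" if "j < i" for i j
  proof
    assume "zvar i - zvar j = 0"
    then have "Poly_Mapping.lookup (zvar i - zvar j) (Poly_Mapping.single i 2) = 0" by simp
    with that show False
      by (simp add: zvar_def lookup_minus lookup_add lookup_xpow single_eq_single_iff)
  qed
  moreover have "(signof (rev_perm n) :: group_ring) \<noteq> 0" by (simp add: sign_def)
  ultimately show ?thesis
    by (simp add: alternant_rhoB vandermonde_def prod_zero_iff)
qed

definition weights :: "nat \<Rightarrow> (nat \<Rightarrow> int) set" where
  "weights n = {\<mu>. \<forall>i\<ge>n. \<mu> i = 0}"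

definition char_elem :: "nat \<Rightarrow> ((nat \<Rightarrow> int) \<Rightarrow> int) \<Rightarrow> group_ring" where
  "char_elem n m = (\<Sum>\<mu> | m \<mu> \<noteq> 0. Poly_Mapping.single (weight_key n \<mu>) (m \<mu>))"

lemma lookup_weight_key: "Poly_Mapping.lookup (weight_key n v) i = (if i < n then v i else 0)"
  by (simp add: weight_key_def lookup_sum lookup_single when_def)

lemma weight_key_eq_iff:
  assumes "\<mu> \<in> weights n" "\<nu> \<in> weights n"
  shows "weight_key n \<mu> = weight_key n \<nu> \<longleftrightarrow> \<mu> = \<nu>"
proof
  assume eq: "weight_key n \<mu> = weight_key n \<nu>"
  show "\<mu> = \<nu>"
  proof
    fix i
    show "\<mu> i = \<nu> i"
      using assms arg_cong[OF eq, of "\<lambda>k. Poly_Mapping.lookup k i"]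
      by (cases "i < n") (auto simp: lookup_weight_key weights_def)
  qed
qed simp

lemma weight_key_diff: "weight_key n a - weight_key n b = weight_key n (\<lambda>i. a i - b i)"
  by (simp add: weight_key_def sum_subtractf single_diff)

lemma weight_key_add: "weight_key n a + weight_key n b = weight_key n (\<lambda>i. a i + b i)"
  by (simp add: weight_key_def sum.distrib single_add)

lemma range_weight_key: "range (weight_key n) = weight_key n ` weights n"
proof -
  have "weight_key n v = weight_key n (\<lambda>i. if i < n then v i else 0)"
    and "(\<lambda>i. if i < n then v i else 0) \<in> weights n" for v
    by (simp_all add: weight_key_def weights_def)
  then show ?thesis by blast
qed

lemma weyl_act_weights: "w \<in> weylB n \<Longrightarrow> \<nu> \<in> weights n \<Longrightarrow> weyl_act w \<nu> \<in> weights n"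
  by (auto simp: weylB_def weights_def weyl_act_def permutes_not_in)

lemma diff_weights: "\<mu> \<in> weights n \<Longrightarrow> \<nu> \<in> weights n \<Longrightarrow> (\<lambda>i. \<mu> i - \<nu> i) \<in> weights n"
  by (simp add: weights_def)

lemma rhoB_weights: "rhoB n \<in> weights n"
  by (simp add: weights_def rhoB_def)

lemma add_rhoB_weights: "lam \<in> weights n \<Longrightarrow> (\<lambda>i. lam i + rhoB n i) \<in> weights n"
  by (simp add: weights_def rhoB_def)

lemma three_omega_n_weights: "three_omega_n n \<in> weights n"
  by (simp add: weights_def three_omega_n_def)

lemma lookup_single_mult:
  fixes a :: "'k::ab_group_add" and c :: "'b::comm_ring_1"
  shows "Poly_Mapping.lookup (Poly_Mapping.single a c * P) k = c * Poly_Mapping.lookup P (k - a)"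
proof -
  have "Poly_Mapping.lookup (Poly_Mapping.single a c * P) k
      = (\<Sum>l. (c * (\<Sum>q. Poly_Mapping.lookup P q when k = l + q)) when a = l)"
    by (simp add: lookup_mult lookup_single when_mult)
  also have "\<dots> = c * (\<Sum>q. Poly_Mapping.lookup P q when k = a + q)" by simp
  also have "(\<Sum>q. Poly_Mapping.lookup P q when k = a + q) = (\<Sum>q. Poly_Mapping.lookup P q when q = k - a)"
    by (intro Sum_any.cong) (auto simp: when_def algebra_simps)
  finally show ?thesis by simp
qed

lemma lookup_alternant_mult:
  "Poly_Mapping.lookup (alternant n \<nu> * P) (weight_key n \<mu>) =
     (\<Sum>w\<in>weylB n. weyl_sgn n w * Poly_Mapping.lookup P (weight_key n (\<lambda>i. \<mu> i - weyl_act w \<nu> i)))"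
  by (simp add: alternant_def sum_distrib_right lookup_sum lookup_single_mult weight_key_diff)

lemma lookup_alternant:
  assumes "\<nu> \<in> weights n" "\<mu> \<in> weights n"
  shows "Poly_Mapping.lookup (alternant n \<nu>) (weight_key n \<mu>) =
     (\<Sum>w\<in>weylB n. weyl_sgn n w * (if weyl_act w \<nu> = \<mu> then 1 else 0))"
  using assms weyl_act_weights
  by (auto simp: alternant_def lookup_sum lookup_single when_def weight_key_eq_iff intro!: sum.cong)

lemma lookup_char_elem:
  assumes fin: "finite {\<mu>. m \<mu> \<noteq> 0}" and supp: "\<And>\<nu>. m \<nu> \<noteq> 0 \<Longrightarrow> \<nu> \<in> weights n"
    and "\<mu> \<in> weights n"
  shows "Poly_Mapping.lookup (char_elem n m) (weight_key n \<mu>) = m \<mu>"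
proof -
  have "Poly_Mapping.lookup (char_elem n m) (weight_key n \<mu>) =
      (\<Sum>\<nu> | m \<nu> \<noteq> 0. if \<nu> = \<mu> then m \<nu> else 0)"
    unfolding char_elem_def lookup_sum
    using supp \<open>\<mu> \<in> weights n\<close> by (intro sum.cong refl) (auto simp: lookup_single when_def weight_key_eq_iff)
  also have "\<dots> = m \<mu>" using fin by (simp add: sum.delta')
  finally show ?thesis .
qed

lemma keys_alternant: "Poly_Mapping.keys (alternant n \<nu>) \<subseteq> range (weight_key n)"
  unfolding alternant_def by (rule order_trans[OF keys_sum]) auto

lemma keys_char_elem: "Poly_Mapping.keys (char_elem n m) \<subseteq> range (weight_key n)"
  unfolding char_elem_def by (rule order_trans[OF keys_sum]) auto

lemma keys_mult_range_weight_key: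
  assumes "Poly_Mapping.keys P \<subseteq> range (weight_key n)" "Poly_Mapping.keys Q \<subseteq> range (weight_key n)"
  shows "Poly_Mapping.keys (P * Q) \<subseteq> range (weight_key n)"
proof
  fix k assume "k \<in> Poly_Mapping.keys (P * Q)"
  then obtain a b where "k = a + b" "a \<in> Poly_Mapping.keys P" "b \<in> Poly_Mapping.keys Q"
    using keys_mult by blast
  with assms obtain u v where "k = weight_key n u + weight_key n v" by blast
  then show "k \<in> range (weight_key n)" by (simp add: weight_key_add)
qed

lemma weyl_sums_outside_weights:
  assumes "\<mu> \<notin> weights n" "\<And>\<nu>. m \<nu> \<noteq> 0 \<Longrightarrow> \<nu> \<in> weights n" "\<nu> \<in> weights n"
  shows "(\<Sum>w\<in>weylB n. weyl_sgn n w * m (\<lambda>i. \<mu> i - weyl_act w (rhoB n) i)) = 0"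
    and "(\<Sum>w\<in>weylB n. weyl_sgn n w * (if weyl_act w \<nu> = \<mu> then 1 else 0)) = 0"
proof -
  obtain i where "i \<ge> n" "\<mu> i \<noteq> 0" using assms(1) by (auto simp: weights_def)
  then have "(\<lambda>i. \<mu> i - weyl_act w (rhoB n) i) \<notin> weights n" if "w \<in> weylB n" for w
    using weyl_act_weights[OF that rhoB_weights] by (auto simp: weights_def)
  with assms(2) show "(\<Sum>w\<in>weylB n. weyl_sgn n w * m (\<lambda>i. \<mu> i - weyl_act w (rhoB n) i)) = 0"
    by (intro sum.neutral) auto
  show "(\<Sum>w\<in>weylB n. weyl_sgn n w * (if weyl_act w \<nu> = \<mu> then 1 else 0)) = 0"
    using weyl_act_weights[OF _ assms(3)] assms(1) by (intro sum.neutral) auto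
qed

lemma is_charB_imp_alternant_eq:
  assumes lam: "lam \<in> weights n" and ch: "is_charB n lam m"
  shows "alternant n (rhoB n) * char_elem n m = alternant n (\<lambda>i. lam i + rhoB n i)"
proof (rule poly_mapping_eqI)
  fix k
  have fin: "finite {\<mu>. m \<mu> \<noteq> 0}" and supp: "\<And>\<nu>. m \<nu> \<noteq> 0 \<Longrightarrow> \<nu> \<in> weights n"
    and eq: "\<And>\<mu>. (\<Sum>w\<in>weylB n. weyl_sgn n w * m (\<lambda>i. \<mu> i - weyl_act w (rhoB n) i))
          = (\<Sum>w\<in>weylB n. weyl_sgn n w * (if weyl_act w (\<lambda>i. lam i + rhoB n i) = \<mu> then 1 else 0))"
    using ch by (auto simp: is_charB_def weights_def)
  note lam_rho = add_rhoB_weights[OF lam]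
  show "Poly_Mapping.lookup (alternant n (rhoB n) * char_elem n m) k
      = Poly_Mapping.lookup (alternant n (\<lambda>i. lam i + rhoB n i)) k"
  proof (cases "k \<in> range (weight_key n)")
    case True
    then obtain \<mu> where \<mu>: "\<mu> \<in> weights n" and k: "k = weight_key n \<mu>"
      by (auto simp: range_weight_key)
    have "Poly_Mapping.lookup (alternant n (rhoB n) * char_elem n m) k
        = (\<Sum>w\<in>weylB n. weyl_sgn n w * m (\<lambda>i. \<mu> i - weyl_act w (rhoB n) i))"
      unfolding k lookup_alternant_mult
      using \<mu> weyl_act_weights[OF _ rhoB_weights]
      by (intro sum.cong refl) (simp add: lookup_char_elem[OF fin supp] diff_weights)
    also have "\<dots> = Poly_Mapping.lookup (alternant n (\<lambda>i. lam i + rhoB n i)) k"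
      unfolding eq k lookup_alternant[OF lam_rho \<mu>] ..
    finally show ?thesis .
  next
    case False
    then show ?thesis
      using keys_mult_range_weight_key[OF keys_alternant keys_char_elem] keys_alternant
      by (metis in_keys_iff subsetD)
  qed
qed

lemma is_charB_unique:
  assumes "lam \<in> weights n" "is_charB n lam m1" "is_charB n lam m2"
  shows "m1 = m2"
proof
  fix \<mu>
  have "char_elem n m1 = char_elem n m2"
    using is_charB_imp_alternant_eq[OF assms(1,2)] is_charB_imp_alternant_eq[OF assms(1,3)]
      alternant_rhoB_nonzero by (metis mult_left_cancel)
  moreover have fin: "finite {\<mu>. m \<mu> \<noteq> 0}" and supp: "\<And>\<nu>. m \<nu> \<noteq> 0 \<Longrightarrow> \<nu> \<in> weights n"
    if "m = m1 \<or> m = m2" for m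
    using that assms(2,3) by (auto simp: is_charB_def weights_def)
  ultimately show "m1 \<mu> = m2 \<mu>"
    by (metis lookup_char_elem)
qed

lemma alternant_dvd_imp_is_charB:
  assumes lam: "lam \<in> weights n"
    and dvd: "alternant n (rhoB n) dvd alternant n (\<lambda>i. lam i + rhoB n i)"
  shows "\<exists>m. is_charB n lam m"
proof -
  obtain M where M: "alternant n (\<lambda>i. lam i + rhoB n i) = alternant n (rhoB n) * M"
    using dvd by (elim dvdE)
  define m where "m \<mu> = (if \<mu> \<in> weights n then Poly_Mapping.lookup M (weight_key n \<mu>) else 0)" for \<mu>
  note lam_rho = add_rhoB_weights[OF lam]
  have "{\<mu>. m \<mu> \<noteq> 0} \<subseteq> weight_key n -` Poly_Mapping.keys M \<inter> weights n"
    by (auto simp: m_def in_keys_iff split: if_splits)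
  moreover have "finite (weight_key n -` Poly_Mapping.keys M \<inter> weights n)"
    by (intro finite_vimage_IntI finite_keys) (simp add: inj_on_def weight_key_eq_iff)
  ultimately have fin: "finite {\<mu>. m \<mu> \<noteq> 0}" by (rule finite_subset)
  have eq: "(\<Sum>w\<in>weylB n. weyl_sgn n w * m (\<lambda>i. \<mu> i - weyl_act w (rhoB n) i))
          = (\<Sum>w\<in>weylB n. weyl_sgn n w * (if weyl_act w (\<lambda>i. lam i + rhoB n i) = \<mu> then 1 else 0))"
    for \<mu>
  proof (cases "\<mu> \<in> weights n")
    case True
    have "(\<Sum>w\<in>weylB n. weyl_sgn n w * m (\<lambda>i. \<mu> i - weyl_act w (rhoB n) i))
        = Poly_Mapping.lookup (alternant n (rhoB n) * M) (weight_key n \<mu>)"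
      unfolding lookup_alternant_mult
      using True weyl_act_weights[OF _ rhoB_weights] by (intro sum.cong refl) (simp add: m_def diff_weights)
    then show ?thesis
      by (simp add: M[symmetric] lookup_alternant[OF lam_rho True])
  next
    case False
    have supp: "\<And>\<nu>. m \<nu> \<noteq> 0 \<Longrightarrow> \<nu> \<in> weights n" by (simp add: m_def split: if_splits)
    show ?thesis using weyl_sums_outside_weights[OF False supp lam_rho] by simp
  qed
  then have "is_charB n lam m"
    using fin by (auto simp: is_charB_def m_def weights_def split: if_splits)
  then show ?thesis by blast
qed

lemma charB_is_charB:
  assumes "lam \<in> weights n" "alternant n (rhoB n) dvd alternant n (\<lambda>i. lam i + rhoB n i)"
  shows "is_charB n lam (charB n lam)"
  unfolding charB_def
  using alternant_dvd_imp_is_charB[OF assms] is_charB_unique[OF assms(1)] by (metis theI)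

section \<open>Principal specialization\<close>

definition tpow :: "int \<Rightarrow> rat fls" where
  "tpow k = fls_X_intpow k"

lemma tpow_0 [simp]: "tpow 0 = 1"
  by (simp add: tpow_def)

lemma tpow_add: "tpow a * tpow b = tpow (a + b)"
  by (simp add: tpow_def fls_X_intpow_times_fls_X_intpow)

lemma tpow_nonzero [simp]: "tpow a \<noteq> 0"
  by (simp add: tpow_def)

lemma tpow_power: "tpow a ^ m = tpow (int m * a)"
  by (simp add: tpow_def fls_X_intpow_power)

lemma prod_tpow: "(\<Prod>i\<in>A. tpow (f i)) = tpow (\<Sum>i\<in>A. f i)"
  by (induction A rule: infinite_finite_induct) (simp_all add: tpow_add)

text \<open>\<open>x\<^sub>i\<close> is sent to \<open>q\<^bsup>(i+1)/2\<^esup> = t\<^bsup>i+1\<^esup>\<close>, with \<open>t = fls_X\<close> as in \<open>psB\<close>.\<close>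

definition spec_exponent :: "nat \<Rightarrow> (nat \<Rightarrow>\<^sub>0 int) \<Rightarrow> int" where
  "spec_exponent n k = (\<Sum>i<n. int (i + 1) * Poly_Mapping.lookup k i)"

definition principal_spec :: "nat \<Rightarrow> group_ring \<Rightarrow> rat fls" where
  "principal_spec n P = (\<Sum>k\<in>Poly_Mapping.keys P.
     of_int (Poly_Mapping.lookup P k) * tpow (spec_exponent n k))"

lemma spec_exponent_add: "spec_exponent n (a + b) = spec_exponent n a + spec_exponent n b"
  by (simp add: spec_exponent_def lookup_add sum.distrib algebra_simps)

lemma spec_exponent_weight_key: "spec_exponent n (weight_key n v) = (\<Sum>i<n. int (i + 1) * v i)"
  by (simp add: spec_exponent_def lookup_weight_key)

lemma principal_spec_superset:
  assumes "finite K" "Poly_Mapping.keys P \<subseteq> K"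
  shows "principal_spec n P =
    (\<Sum>k\<in>K. of_int (Poly_Mapping.lookup P k) * tpow (spec_exponent n k))"
  unfolding principal_spec_def using assms by (intro sum.mono_neutral_left) (auto simp: in_keys_iff)

lemma principal_spec_add: "principal_spec n (P + Q) = principal_spec n P + principal_spec n Q"
proof -
  let ?K = "Poly_Mapping.keys P \<union> Poly_Mapping.keys Q"
  have "Poly_Mapping.keys (P + Q) \<subseteq> ?K" by (rule keys_add)
  then show ?thesis
    by (simp add: principal_spec_superset[of ?K] lookup_add sum.distrib distrib_right)
qed

lemma principal_spec_0: "principal_spec n 0 = 0"
  by (simp add: principal_spec_def)

lemma principal_spec_sum: "principal_spec n (\<Sum>x\<in>A. f x) = (\<Sum>x\<in>A. principal_spec n (f x))"
  by (induction A rule: infinite_finite_induct) (simp_all add: principal_spec_add principal_spec_0)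

lemma principal_spec_single:
  "principal_spec n (Poly_Mapping.single k c) = of_int c * tpow (spec_exponent n k)"
  by (simp add: principal_spec_superset[of "{k}"])

lemma sum_single_lookup: "(\<Sum>k\<in>Poly_Mapping.keys P. Poly_Mapping.single k (Poly_Mapping.lookup P k)) = P"
  by (rule poly_mapping_eqI) (simp add: lookup_sum lookup_single when_def in_keys_iff sum.delta')

lemma principal_spec_mult_single:
  "principal_spec n (Poly_Mapping.single a c * Poly_Mapping.single b d)
    = principal_spec n (Poly_Mapping.single a c) * principal_spec n (Poly_Mapping.single b d)"
  by (simp add: mult_single principal_spec_single spec_exponent_add tpow_add
      mult_ac)

lemma principal_spec_eq_sum_single:
  "principal_spec n P = (\<Sum>k\<in>Poly_Mapping.keys P. principal_spec n (Poly_Mapping.single k (Poly_Mapping.lookup P k)))"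
  by (simp add: principal_spec_single principal_spec_def[of n P])

lemma principal_spec_mult: "principal_spec n (P * Q) = principal_spec n P * principal_spec n Q"
proof -
  let ?s = "\<lambda>P k. Poly_Mapping.single k (Poly_Mapping.lookup P k)"
  have "P * Q = (\<Sum>a\<in>Poly_Mapping.keys P. \<Sum>b\<in>Poly_Mapping.keys Q. ?s P a * ?s Q b)"
    by (subst (1) sum_single_lookup[symmetric], subst (2) sum_single_lookup[symmetric])
      (simp add: sum_product)
  then have "principal_spec n (P * Q) = (\<Sum>a\<in>Poly_Mapping.keys P. \<Sum>b\<in>Poly_Mapping.keys Q.
      principal_spec n (?s P a) * principal_spec n (?s Q b))"
    by (simp add: principal_spec_sum principal_spec_mult_single)
  also have "\<dots> = principal_spec n P * principal_spec n Q"
    by (simp only: principal_spec_eq_sum_single[of n P] principal_spec_eq_sum_single[of n Q] sum_product)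
  finally show ?thesis .
qed

lemma principal_spec_alternant:
  "principal_spec n (alternant n \<nu>) = det (mat n n (\<lambda>(i,j).
     tpow (int (i + 1) * \<nu> j) - tpow (int (i + 1) * - \<nu> j)))"
proof -
  have "principal_spec n (alternant n \<nu>) = (\<Sum>w\<in>weylB n. of_int (weyl_sgn n w) *
      (\<Prod>i<n. tpow (int (i + 1) * weyl_act w \<nu> i)))"
    by (simp add: alternant_def principal_spec_sum principal_spec_single spec_exponent_weight_key
        tpow_add flip: prod_tpow)
  then show ?thesis
    using weyl_alternating_sum_eq_det[where g="\<lambda>i k. tpow (int (i + 1) * k)"] by simp
qed

lemma psB_eq_principal_spec:
  assumes "finite {\<mu>. charB n lam \<mu> \<noteq> 0}"
  shows "psB n lam = principal_spec n (char_elem n (charB n lam))"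
  using assms by (simp add: psB_def char_elem_def principal_spec_sum principal_spec_single
      spec_exponent_weight_key tpow_def)

lemma principal_spec_weyl_character_formula:
  assumes "lam \<in> weights n" "alternant n (rhoB n) dvd alternant n (\<lambda>i. lam i + rhoB n i)"
  shows "principal_spec n (alternant n (rhoB n)) * psB n lam
    = principal_spec n (alternant n (\<lambda>i. lam i + rhoB n i))"
proof -
  have ch: "is_charB n lam (charB n lam)" by (rule charB_is_charB[OF assms])
  then have "psB n lam = principal_spec n (char_elem n (charB n lam))"
    by (intro psB_eq_principal_spec) (simp add: is_charB_def)
  then show ?thesis
    by (simp add: is_charB_imp_alternant_eq[OF assms(1) ch, symmetric] principal_spec_mult)
qed

lemma principal_spec_alternant_rev:
  assumes \<nu>: "\<And>j. j < n \<Longrightarrow> \<nu> (rev_perm n j) = int (a j)"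
  shows "principal_spec n (alternant n \<nu>) = signof (rev_perm n) *
    ((\<Prod>j<n. tpow (a j) - tpow (- a j)) *
     vandermonde n (\<lambda>j. tpow (a j) + tpow (- a j)))"
proof -
  define y where "y j = (tpow (int (a j)) :: rat fls)" for j
  define y' where "y' j = (tpow (- int (a j)) :: rat fls)" for j
  have entry: "tpow (int (i + 1) * \<nu> (rev_perm n j)) - tpow (int (i + 1) * - \<nu> (rev_perm n j))
      = (y j - y' j) * poly (cheb 0 i) (y j + y' j)" if "j < n" for i j
  proof -
    have "tpow (int (i + 1) * \<nu> (rev_perm n j)) - tpow (int (i + 1) * - \<nu> (rev_perm n j))
        = y j ^ i * y j - y' j ^ i * y' j"
      using that by (simp add: \<nu> y_def y'_def tpow_power tpow_add algebra_simps)
    also have "\<dots> = (y j - y' j) * poly (cheb 0 i) (y j + y' j)"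
      by (rule poly_cheb) (simp_all add: y_def y'_def tpow_add algebra_simps)
    finally show ?thesis .
  qed
  have "principal_spec n (alternant n \<nu>) = signof (rev_perm n) *
      det (transpose_mat (mat n n (\<lambda>(j,i). (y j - y' j) * poly (cheb 0 i) (y j + y' j))))"
    unfolding principal_spec_alternant
    by (subst det_reverse_cols, intro arg_cong[where f="\<lambda>A. _ * det A"] eq_matI)
      (simp_all add: entry[symmetric])
  also have "\<dots> = signof (rev_perm n) * ((\<Prod>j<n. y j - y' j) * vandermonde n (\<lambda>j. y j + y' j))"
    by (simp add: det_transpose[of _ n] det_scale_rows det_poly_cols_eq_vandermonde degree_cheb
        coeff_cheb_self)
  finally show ?thesis by (simp add: y_def y'_def)
qed

lemma qvar_power: "qvar ^ m = tpow (2 * int m)"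
  by (simp add: qvar_def tpow_def fls_X_power_conv_shift_1 fls_X_intpow_power mult.commute
      flip: power_mult)

lemma tpow_diff_eq: "tpow (int a) - tpow (- int a) = - tpow (- int a) * (1 - qvar ^ a)"
  by (simp add: qvar_power algebra_simps tpow_add)

lemma tpow_sum_diff_eq:
  "(tpow a + tpow (- a)) - (tpow b + tpow (- b))
    = (tpow (- a) :: rat fls) * (1 - tpow (a - b)) * (1 - tpow (a + b))"
  by (simp add: algebra_simps tpow_add)

definition qvandermonde :: "nat \<Rightarrow> rat fls" where
  "qvandermonde n = (\<Prod>k<n. \<Prod>k'<k. 1 - qvar ^ (k - k'))"

definition qtriangle :: "nat \<Rightarrow> nat \<Rightarrow> rat fls" where
  "qtriangle c n = (\<Prod>k<n. \<Prod>k'\<le>k. 1 - qvar ^ (k + k' + 1 + c))"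

text \<open>The \<open>k\<close>-th factor of \<open>principal_spec_alternant_rev\<close> for \<open>a k = 2k + 1 + c\<close>.\<close>

lemma odd_alternant_factor:
  assumes a_def: "\<And>k. a k = 2 * k + 1 + c"
  shows "(tpow (a k) - tpow (- a k)) *
      (\<Prod>k'<k. (tpow (a k) + tpow (- a k)) - (tpow (a k') + tpow (- a k')))
    = - tpow (- int ((k + 1) * a k)) *
      ((\<Prod>k'<k. 1 - qvar ^ (k - k')) * (\<Prod>k'\<le>k. 1 - qvar ^ (k + k' + 1 + c)))"
proof -
  have "(tpow (a k) + tpow (- a k)) - (tpow (a k') + tpow (- a k'))
      = tpow (- a k) * ((1 - qvar ^ (k - k')) * (1 - qvar ^ (k + k' + 1 + c)))"
    if "k' < k" for k'
  proof -
    have "int (a k) - int (a k') = 2 * int (k - k')" "int (a k) + int (a k') = 2 * int (k + k' + 1 + c)"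
      using that by (simp_all add: a_def of_nat_diff)
    then show ?thesis by (simp only: tpow_sum_diff_eq qvar_power mult.assoc)
  qed
  then have vandermonde_row: "(\<Prod>k'<k. (tpow (a k) + tpow (- a k)) - (tpow (a k') + tpow (- a k')))
      = tpow (- a k) ^ k * ((\<Prod>k'<k. 1 - qvar ^ (k - k')) * (\<Prod>k'<k. 1 - qvar ^ (k + k' + 1 + c)))"
    by (simp add: prod.distrib)
  have diagonal: "(\<Prod>k'\<le>k. 1 - qvar ^ (k + k' + 1 + c))
      = (\<Prod>k'<k. 1 - qvar ^ (k + k' + 1 + c)) * (1 - qvar ^ a k)"
    unfolding lessThan_Suc_atMost[symmetric] by (simp add: a_def mult_2)
  have monomial: "tpow (- int ((k + 1) * a k)) = tpow (- a k) ^ k * tpow (- a k)"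
    by (simp add: tpow_power tpow_add algebra_simps)
  show ?thesis
    unfolding tpow_diff_eq vandermonde_row diagonal monomial
    by (simp only: mult_ac mult_minus_left mult_minus_right)
qed

lemma principal_spec_alternant_odd:
  assumes \<nu>: "\<And>j. j < n \<Longrightarrow> \<nu> (rev_perm n j) = int (2 * j + 1 + c)"
  shows "principal_spec n (alternant n \<nu>) = signof (rev_perm n) * (-1) ^ n *
    tpow (- (\<Sum>k<n. int ((k + 1) * (2 * k + 1 + c)))) * qvandermonde n * qtriangle c n"
proof -
  define a where "a k = 2 * k + 1 + c" for k
  have "principal_spec n (alternant n \<nu>) = signof (rev_perm n) *
      ((\<Prod>k<n. tpow (a k) - tpow (- a k)) * vandermonde n (\<lambda>k. tpow (a k) + tpow (- a k)))"
    by (rule principal_spec_alternant_rev) (simp add: \<nu> a_def)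
  also have "\<dots> = signof (rev_perm n) * (\<Prod>k<n. (tpow (a k) - tpow (- a k)) *
      (\<Prod>k'<k. (tpow (a k) + tpow (- a k)) - (tpow (a k') + tpow (- a k'))))"
    by (simp only: vandermonde_def prod.distrib)
  also have "\<dots> = signof (rev_perm n) *
      (\<Prod>k<n. - tpow (- int ((k + 1) * a k)) *
        ((\<Prod>k'<k. 1 - qvar ^ (k - k')) * (\<Prod>k'\<le>k. 1 - qvar ^ (k + k' + 1 + c))))"
    by (simp only: odd_alternant_factor[OF a_def])
  also have "\<dots> = signof (rev_perm n) * (-1) ^ n *
      tpow (- (\<Sum>k<n. int ((k + 1) * a k))) * qvandermonde n * qtriangle c n"
    by (simp only: mult_minus_left prod_uminus card_lessThan prod.distrib prod_tpow sum_negf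
        qvandermonde_def qtriangle_def mult.assoc)
  finally show ?thesis by (simp add: a_def)
qed

section \<open>A q-Catalan product identity\<close>

lemma fls_nth_qvar_power: "fls_nth (qvar ^ m) k = (if k = 2 * int m then 1 else 0)"
  by (simp add: qvar_def flip: power_mult)

lemma one_minus_qvar_power_nonzero:
  assumes "1 \<le> m"
  shows "1 - qvar ^ m \<noteq> 0"
proof
  assume "1 - qvar ^ m = 0"
  then have "fls_nth (1 - qvar ^ m) 0 = 0" by simp
  with assms show False by (simp add: fls_nth_qvar_power)
qed

lemma fls_subdegree_one_minus_qvar_power: "1 \<le> m \<Longrightarrow> fls_subdegree (1 - qvar ^ m) = 0"
  by (rule fls_subdegree_eqI) (simp_all add: fls_nth_qvar_power)

lemma prod_fls_subdegree_0:
  assumes "\<And>x. x \<in> A \<Longrightarrow> f x \<noteq> 0 \<and> fls_subdegree (f x :: 'a::field fls) = 0"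
  shows "prod f A \<noteq> 0 \<and> fls_subdegree (prod f A) = 0"
  using assms by (induction A rule: infinite_finite_induct) (simp_all add: fls_subdegree_mult)

lemma qint_eq: "(1 - qvar) * qint m = 1 - qvar ^ m"
  by (simp add: qint_def one_diff_power_eq)

lemma qint_nonzero: "1 \<le> m \<Longrightarrow> qint m \<noteq> 0"
  using qint_eq[of m] one_minus_qvar_power_nonzero[of m] by auto

lemma qfact_Suc: "qfact (Suc m) = qfact m * qint (Suc m)"
  by (simp add: qfact_def)

lemma qfact_nonzero: "qfact m \<noteq> 0"
  by (induction m) (simp_all add: qfact_Suc qint_nonzero, simp add: qfact_def)

lemma qCat_eq: "qCat k = qfact (2 * k) / (qfact k * qfact k * qint (k + 1))"
  by (simp add: qCat_def qbinom_def mult_2 field_simps)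

lemma qCat_Suc_Suc:
  "qCat (k + 2) * qint (k + 2) * qint (k + 3) = qCat (k + 1) * qint (2 * k + 3) * qint (2 * k + 4)"
proof -
  have "qfact (k + 2) = qfact (k + 1) * qint (k + 2)"
    and "qfact (2 * k + 4) = qfact (2 * k + 2) * qint (2 * k + 3) * qint (2 * k + 4)"
    by (simp_all add: qfact_Suc numeral_eq_Suc)
  moreover have "qint (k + 1) \<noteq> 0" "qint (k + 2) \<noteq> 0" "qint (k + 3) \<noteq> 0"
    by (simp_all add: qint_nonzero)
  ultimately show ?thesis
    by (simp add: qCat_eq algebra_simps numeral_eq_Suc qfact_nonzero field_simps)
qed

lemma one_plus_qvar_power_mult_qint: "(1 + qvar ^ m) * qint m = qint (2 * m)"
proof -
  have "(1 - qvar) * ((1 + qvar ^ m) * qint m) = (1 + qvar ^ m) * (1 - qvar ^ m)"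
    by (simp only: qint_eq[symmetric] mult_ac)
  also have "\<dots> = 1 - qvar ^ (2 * m)"
    by (simp only: mult_2 power_add) (simp add: algebra_simps)
  also have "\<dots> = (1 - qvar) * qint (2 * m)"
    by (rule qint_eq[symmetric])
  finally show ?thesis
    using one_minus_qvar_power_nonzero[of 1] by simp
qed

definition qcat_prod :: "nat \<Rightarrow> rat fls" where
  "qcat_prod n = qCat (n + 1) * (\<Prod>k=1..n. 1 + qvar ^ k)"

lemma qcat_prod_0: "qcat_prod 0 = 1"
proof -
  have "qfact 2 = qint 2" "qfact 1 = 1" by (simp_all add: qfact_def qint_def numeral_2_eq_2)
  then show ?thesis using qint_nonzero[of 2] by (simp add: qcat_prod_def qCat_eq numeral_2_eq_2)
qed

lemma qcat_prod_Suc: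
  "qcat_prod (Suc n) * ((1 - qvar ^ (n + 1)) * (1 - qvar ^ (n + 2)) * (1 - qvar ^ (n + 3)))
    = qcat_prod n * ((1 - qvar ^ (2 * n + 2)) * (1 - qvar ^ (2 * n + 3)) * (1 - qvar ^ (2 * n + 4)))"
proof -
  have "qcat_prod (Suc n) * (qint (n + 1) * qint (n + 2) * qint (n + 3))
      = (qCat (n + 2) * qint (n + 2) * qint (n + 3)) * (\<Prod>k=1..n. 1 + qvar ^ k) *
        ((1 + qvar ^ (n + 1)) * qint (n + 1))"
    by (simp add: qcat_prod_def prod.nat_ivl_Suc' numeral_eq_Suc mult_ac)
  also have "\<dots> = qcat_prod n * (qint (2 * n + 2) * qint (2 * n + 3) * qint (2 * n + 4))"
    unfolding qCat_Suc_Suc one_plus_qvar_power_mult_qint by (simp add: qcat_prod_def mult_ac)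
  finally have "qcat_prod (Suc n) * (qint (n + 1) * qint (n + 2) * qint (n + 3)) * (1 - qvar) ^ 3
      = qcat_prod n * (qint (2 * n + 2) * qint (2 * n + 3) * qint (2 * n + 4)) * (1 - qvar) ^ 3"
    by simp
  then show ?thesis
    by (simp only: qint_eq[symmetric] power3_eq_cube mult_ac)
qed

lemma prod_lessThan_shift_3:
  fixes f :: "nat \<Rightarrow> 'a::comm_monoid_mult"
  shows "(\<Prod>k<n. f (k + 3)) * (f 0 * f 1 * f 2) = (\<Prod>k<n. f k) * (f n * f (n + 1) * f (n + 2))"
  by (induction n) (simp_all add: numeral_eq_Suc mult_ac)

lemma qtriangle_Suc: "qtriangle c (Suc n) = qtriangle c n * (\<Prod>k\<le>n. 1 - qvar ^ (n + k + 1 + c))"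
  by (simp add: qtriangle_def)

lemma qtriangle_3: "qtriangle 3 n = qcat_prod n * qtriangle 0 n"
proof (induction n)
  case 0
  show ?case by (simp add: qtriangle_def qcat_prod_0)
next
  case (Suc n)
  define f where "f k = 1 - qvar ^ (n + k + 1)" for k
  have "f k \<noteq> 0" for k
    unfolding f_def by (rule one_minus_qvar_power_nonzero) simp
  then have f_nonzero: "f 0 * f 1 * f 2 \<noteq> 0" by simp
  have "qtriangle 3 (Suc n) * (f 0 * f 1 * f 2)
      = qcat_prod n * qtriangle 0 n * ((\<Prod>k<Suc n. f (k + 3)) * (f 0 * f 1 * f 2))"
    by (simp add: Suc qtriangle_Suc f_def lessThan_Suc_atMost algebra_simps)
  also have "\<dots> = qcat_prod n * qtriangle 0 n * (\<Prod>k<Suc n. f k) *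
      (f (n + 1) * f (n + 2) * f (n + 3))"
    unfolding prod_lessThan_shift_3 by (simp add: numeral_eq_Suc mult_ac)
  also have "\<dots> = qcat_prod (Suc n) * (f 0 * f 1 * f 2) * qtriangle 0 (Suc n)"
    using qcat_prod_Suc[of n]
    by (simp add: qtriangle_Suc f_def lessThan_Suc_atMost numeral_eq_Suc mult_ac)
  finally show ?case using f_nonzero by (simp add: mult_ac)
qed

lemma qtriangle_nonzero: "qtriangle c n \<noteq> 0 \<and> fls_subdegree (qtriangle c n) = 0"
  unfolding qtriangle_def
  by (intro prod_fls_subdegree_0
      conjI[OF one_minus_qvar_power_nonzero fls_subdegree_one_minus_qvar_power]) simp_all

lemma qvandermonde_nonzero: "qvandermonde n \<noteq> 0"
proof -
  have "qvandermonde n \<noteq> 0 \<and> fls_subdegree (qvandermonde n) = 0"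
    unfolding qvandermonde_def
    by (intro prod_fls_subdegree_0
        conjI[OF one_minus_qvar_power_nonzero fls_subdegree_one_minus_qvar_power]) auto
  then show ?thesis ..
qed

lemma qcat_prod_nonzero: "qcat_prod n \<noteq> 0 \<and> fls_subdegree (qcat_prod n) = 0"
  using qtriangle_3[of n] qtriangle_nonzero[of 3 n] qtriangle_nonzero[of 0 n]
  by (auto simp: fls_subdegree_mult)

lemma psB_tilde_eq:
  assumes "psB n lam = tpow e * P" "P \<noteq> 0" "fls_subdegree P = 0"
  shows "psB_tilde n lam = P"
  using assms by (simp add: psB_tilde_def tpow_def fls_subdegree_mult_fls_X_intpow
      fls_X_intpow_times_conv_shift)

lemma psB_three_omega_n: "psB n (three_omega_n n) = tpow (- (\<Sum>k<n. 3 * int (k + 1))) * qcat_prod n"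
proof -
  define K where "K = signof (rev_perm n) * (-1) ^ n *
    tpow (- (\<Sum>k<n. int ((k + 1) * (2 * k + 1)))) * qvandermonde n * qtriangle 0 n"
  have rho: "principal_spec n (alternant n (rhoB n)) = K"
    using principal_spec_alternant_odd[of n "rhoB n" 0] by (simp add: K_def rhoB_rev_perm)
  have "K * psB n (three_omega_n n) = principal_spec n (alternant n (\<lambda>i. three_omega_n n i + rhoB n i))"
    unfolding rho[symmetric]
    by (rule principal_spec_weyl_character_formula[OF three_omega_n_weights alternant_rhoB_dvd])
  also have "\<dots> = signof (rev_perm n) * (-1) ^ n *
      tpow (- (\<Sum>k<n. int ((k + 1) * (2 * k + 1 + 3)))) * qvandermonde n * qtriangle 3 n"
    by (rule principal_spec_alternant_odd) (simp add: three_omega_rhoB_rev_perm)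
  also have "\<dots> = K * (tpow (- (\<Sum>k<n. 3 * int (k + 1))) * qcat_prod n)"
  proof -
    have "(\<Sum>k<n. int ((k + 1) * (2 * k + 1 + 3)))
        = (\<Sum>k<n. 3 * int (k + 1)) + (\<Sum>k<n. int ((k + 1) * (2 * k + 1)))"
      by (simp add: sum.distrib[symmetric] algebra_simps)
    then have "tpow (- (\<Sum>k<n. int ((k + 1) * (2 * k + 1 + 3))))
        = tpow (- (\<Sum>k<n. 3 * int (k + 1))) * tpow (- (\<Sum>k<n. int ((k + 1) * (2 * k + 1))))"
      by (simp add: tpow_add)
    then show ?thesis unfolding K_def qtriangle_3 by (simp only: mult_ac)
  qed
  finally have "K * psB n (three_omega_n n) = K * (tpow (- (\<Sum>k<n. 3 * int (k + 1))) * qcat_prod n)" .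
  moreover have "K \<noteq> 0"
    using qtriangle_nonzero[of 0 n] qvandermonde_nonzero[of n] by (simp add: K_def sign_def)
  ultimately show ?thesis by simp
qed

theorem corollary5p18:
  fixes n :: nat
  assumes "1 \<le> n"
  shows "qCat (n + 1) * (\<Prod>k=1..n. 1 + qvar ^ k) = psB_tilde n (three_omega_n n)"
proof -
  have "psB_tilde n (three_omega_n n) = qcat_prod n"
    using psB_tilde_eq[OF psB_three_omega_n] qcat_prod_nonzero by blast
  then show ?thesis by (simp only: qcat_prod_def)
qed

end
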